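(* Let $\Lambda$ be a weight function with polynomial growth and $\rho\in(0,\tfrac1\mu]$. Let $\sigma\in S^0_{\rho,\Lambda}$ and let $F$ be a $C^\infty$ function on the complex plane $\mathbb{C}$ (viewed as $\mathbb{R}^2$). Then $F\circ\sigma\in S^0_{\rho,\Lambda}$.
   Context: A positive function $\Lambda\in C^\infty(\mathbb{R}^n)$ is a weight function with polynomial growth if there are constants $0<\mu_0\le\mu_1$, $0<C_0\le C_1$ with $C_0(1+|\xi|)^{\mu_0}\le\Lambda(\xi)\le C_1(1+|\xi|)^{\mu_1}$ for all $\xi$, and there is a real $\mu\ge\mu_1$ such that for all multi-indices $\alpha,\gamma$ with $\gamma_j\in\{0,1\}$ there is $C_{\alpha,\gamma}>0$ with $|\xi^\gamma(\partial^{\alpha+\gamma}\Lambda)(\xi)|\le C_{\alpha,\gamma}\Lambda(\xi)^{1-|\alpha|/\mu}$. For $m\in\mathbb{R}$ and $\rho\in(0,1/\mu]$, $S^m_{\rho,\Lambda}$ is the set of $\sigma\in C^\infty(\mathbb{R}^n\times\mathbb{R}^n)$ (complex-valued) such that for all multi-indices $\alpha,\beta$ there is $C_{\alpha,\beta}>0$ with $|\partial_x^\alpha\partial_\xi^\beta\sigma(x,\xi)|\le C_{\alpha,\beta}\Lambda(\xi)^{m-\rho|\beta|}$ for all $x,\xi\in\mathbb{R}^n$. *)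

theory Defs
  imports "HOL-Analysis.Analysis"
begin

definition dderiv :: "'a::real_normed_vector \<Rightarrow> ('a \<Rightarrow> 'b::real_normed_vector) \<Rightarrow> 'a \<Rightarrow> 'b" where
  "dderiv v f x = frechet_derivative f (at x) v"

fun dderivs :: "'a::real_normed_vector list \<Rightarrow> ('a \<Rightarrow> 'b::real_normed_vector) \<Rightarrow> 'a \<Rightarrow> 'b" where
  "dderivs [] f = f"
| "dderivs (v # vs) f = dderiv v (dderivs vs f)"

definition smooth :: "('a::euclidean_space \<Rightarrow> 'b::real_normed_vector) \<Rightarrow> bool" where
  "smooth f \<longleftrightarrow> (\<forall>vs. set vs \<subseteq> Basis \<longrightarrow> (\<forall>x. dderivs vs f differentiable (at x)))"

definition multi_list :: "('n::finite \<Rightarrow> nat) \<Rightarrow> 'n list" where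
  "multi_list \<alpha> = (SOME L. \<forall>i. count (mset L) i = \<alpha> i)"

definition mabs :: "('n::finite \<Rightarrow> nat) \<Rightarrow> nat" where
  "mabs \<alpha> = (\<Sum>i\<in>UNIV. \<alpha> i)"

definition pd :: "('n::finite \<Rightarrow> nat) \<Rightarrow> (real^'n \<Rightarrow> 'b::real_normed_vector) \<Rightarrow> real^'n \<Rightarrow> 'b" where
  "pd \<alpha> f = dderivs (map (\<lambda>i. axis i 1) (multi_list \<alpha>)) f"

definition pd_xxi :: "('n::finite \<Rightarrow> nat) \<Rightarrow> ('n \<Rightarrow> nat) \<Rightarrow> ((real^'n) \<times> (real^'n) \<Rightarrow> 'b::real_normed_vector)
    \<Rightarrow> (real^'n) \<times> (real^'n) \<Rightarrow> 'b" where
  "pd_xxi \<alpha> \<beta> f = dderivs (map (\<lambda>i. (axis i 1, 0)) (multi_list \<alpha>) @ map (\<lambda>i. (0, axis i 1)) (multi_list \<beta>)) f"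

definition mpow :: "real^'n \<Rightarrow> ('n::finite \<Rightarrow> nat) \<Rightarrow> real" where
  "mpow \<xi> \<gamma> = (\<Prod>i\<in>UNIV. (\<xi> $ i) ^ (\<gamma> i))"

definition weight_poly_growth :: "(real^'n::finite \<Rightarrow> real) \<Rightarrow> real \<Rightarrow> bool" where
  "weight_poly_growth \<Lambda> \<mu> \<longleftrightarrow>
     smooth \<Lambda> \<and> (\<forall>\<xi>. \<Lambda> \<xi> > 0) \<and>
     (\<exists>\<mu>0 \<mu>1 C0 C1. 0 < \<mu>0 \<and> \<mu>0 \<le> \<mu>1 \<and> 0 < C0 \<and> C0 \<le> C1 \<and> \<mu>1 \<le> \<mu> \<and>
        (\<forall>\<xi>. C0 * (1 + norm \<xi>) powr \<mu>0 \<le> \<Lambda> \<xi> \<and> \<Lambda> \<xi> \<le> C1 * (1 + norm \<xi>) powr \<mu>1)) \<and>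
     (\<forall>\<alpha> \<gamma>. (\<forall>j. \<gamma> j \<le> 1) \<longrightarrow>
        (\<exists>C>0. \<forall>\<xi>. \<bar>mpow \<xi> \<gamma> * pd (\<lambda>i. \<alpha> i + \<gamma> i) \<Lambda> \<xi>\<bar>
                    \<le> C * \<Lambda> \<xi> powr (1 - real (mabs \<alpha>) / \<mu>)))"

definition symbol_class :: "real \<Rightarrow> real \<Rightarrow> (real^'n::finite \<Rightarrow> real) \<Rightarrow> ((real^'n) \<times> (real^'n) \<Rightarrow> complex) set" where
  "symbol_class m \<rho> \<Lambda> = {\<sigma>. smooth \<sigma> \<and>
     (\<forall>\<alpha> \<beta>. \<exists>C>0. \<forall>x \<xi>. norm (pd_xxi \<alpha> \<beta> \<sigma> (x, \<xi>)) \<le> C * \<Lambda> \<xi> powr (m - \<rho> * real (mabs \<beta>)))}"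

end

theory Submission
  imports Defs
begin

text \<open>By the chain and product rules, every derivative \<open>\<partial>\<^sub>x\<^sup>\<alpha> \<partial>\<^sub>\<xi>\<^sup>\<beta> (F \<circ> \<sigma>)\<close> is a sum of
  products of real and imaginary parts of derivatives \<open>\<partial>\<^sub>x\<^sup>\<alpha>' \<partial>\<^sub>\<xi>\<^sup>\<beta>' \<sigma>\<close> and of derivatives of
  \<open>F\<close> evaluated at \<open>\<sigma>\<close>, in which the \<open>\<xi>\<close>-orders \<open>|\<beta>'|\<close> of the factors add up to \<open>|\<beta>|\<close>;
  that the derivatives of \<open>\<sigma>\<close> arising this way are again of this form uses the symmetry of
  second derivatives. As \<open>\<sigma>\<close> is bounded and the derivatives of \<open>F\<close> are continuous, the factors
  coming from \<open>F\<close> are bounded, while a factor \<open>\<partial>\<^sub>x\<^sup>\<alpha>' \<partial>\<^sub>\<xi>\<^sup>\<beta>' \<sigma>\<close> is \<open>O(\<Lambda>^(-\<rho>|\<beta>'|))\<close>;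
  multiplying gives \<open>O(\<Lambda>^(-\<rho>|\<beta>|))\<close>.\<close>

lemma dderivs_append: "dderivs (us @ vs) f = dderivs us (dderivs vs f)"
  by (induction us) auto

lemma has_derivative_dderiv:
  assumes "f differentiable (at x)"
  shows "(f has_derivative (\<lambda>v. dderiv v f x)) (at x)"
  using frechet_derivative_works[of f "at x"] assms unfolding dderiv_def by (simp add: eta_contract_eq)

lemma dderiv_eqI:
  assumes "(f has_derivative f') (at x)"
  shows "dderiv v f x = f' v"
  using assms frechet_derivative_at unfolding dderiv_def by metis

lemma dderiv_scaleR:
  assumes "f differentiable (at x)"
  shows "dderiv (c *\<^sub>R v) f x = c *\<^sub>R dderiv v f x"
  using has_derivative_linear[OF has_derivative_dderiv[OF assms]] by (rule linear_cmul)

lemma dderiv_add: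
  assumes "f differentiable (at x)" "g differentiable (at x)"
  shows "dderiv v (\<lambda>y. f y + g y) x = dderiv v f x + dderiv v g x"
  using dderiv_eqI[OF has_derivative_add[OF assms[THEN has_derivative_dderiv]]] by simp

lemma dderiv_mult:
  fixes f g :: "'a::real_normed_vector \<Rightarrow> 'b::real_normed_algebra"
  assumes "f differentiable (at x)" "g differentiable (at x)"
  shows "dderiv v (\<lambda>y. f y * g y) x = f x * dderiv v g x + dderiv v f x * g x"
  using dderiv_eqI[OF has_derivative_mult[OF assms[THEN has_derivative_dderiv]]] by simp

lemma dderiv_bounded_linear:
  assumes "bounded_linear L" "f differentiable (at x)"
  shows "dderiv v (\<lambda>y. L (f y)) x = L (dderiv v f x)"
  using dderiv_eqI[OF bounded_linear.has_derivative[OF assms(1) has_derivative_dderiv[OF assms(2)]]] .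

lemma dderiv_compose:
  assumes "f differentiable (at x)" "G differentiable (at (f x))"
  shows "dderiv v (\<lambda>y. G (f y)) x = dderiv (dderiv v f x) G (f x)"
  using dderiv_eqI[OF has_derivative_compose[OF assms[THEN has_derivative_dderiv]]] .

lemma dderiv_complex_direction:
  fixes G :: "complex \<Rightarrow> 'b::real_normed_vector"
  assumes "G differentiable (at w)"
  shows "dderiv c G w = Re c *\<^sub>R dderiv 1 G w + Im c *\<^sub>R dderiv \<i> G w"
proof -
  have lin: "linear (\<lambda>v. dderiv v G w)"
    using has_derivative_linear[OF has_derivative_dderiv[OF assms]] .
  have "c = Re c *\<^sub>R 1 + Im c *\<^sub>R \<i>"
    by (simp add: complex_eq_iff)
  then show ?thesis
    by (metis linear_add[OF lin] linear_cmul[OF lin])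
qed

lemma has_vector_derivative_dderiv_line:
  assumes "f differentiable (at (x + t *\<^sub>R v))"
  shows "((\<lambda>t. f (x + t *\<^sub>R v)) has_vector_derivative dderiv v f (x + t *\<^sub>R v)) (at t)"
proof -
  have "((\<lambda>t. x + t *\<^sub>R v) has_derivative (\<lambda>h. h *\<^sub>R v)) (at t)"
    by (auto intro!: derivative_eq_intros)
  from has_derivative_compose[OF this has_derivative_dderiv[OF assms]] show ?thesis
    unfolding has_vector_derivative_def dderiv_scaleR[OF assms] .
qed

section \<open>Symmetry of second derivatives\<close>

lemma increment_minus_linear_bound:
  fixes f :: "real \<Rightarrow> 'b::real_normed_vector"
  assumes "\<And>r. r \<in> closed_segment 0 s \<Longrightarrow> (f has_vector_derivative f' r) (at r)"
    and "\<And>r. r \<in> closed_segment 0 s \<Longrightarrow> norm (f' r - c) \<le> K"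
  shows "norm (f s - f 0 - s *\<^sub>R c) \<le> K * \<bar>s\<bar>"
proof -
  have "norm ((f s - s *\<^sub>R c) - (f 0 - 0 *\<^sub>R c)) \<le> K * norm (s - 0)"
  proof (rule differentiable_bound[where f = "\<lambda>r. f r - r *\<^sub>R c" and f' = "\<lambda>r h. h *\<^sub>R (f' r - c)"])
    fix r assume r: "r \<in> closed_segment 0 s"
    from assms(1)[OF r] have "((\<lambda>r. f r - r *\<^sub>R c) has_derivative (\<lambda>h. h *\<^sub>R f' r - h *\<^sub>R c)) (at r)"
      unfolding has_vector_derivative_def by (auto intro!: derivative_eq_intros)
    then show "((\<lambda>r. f r - r *\<^sub>R c) has_derivative (\<lambda>h. h *\<^sub>R (f' r - c))) (at r within closed_segment 0 s)"
      by (simp add: has_derivative_at_withinI scaleR_diff_right)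
    have "onorm (\<lambda>h::real. h *\<^sub>R (f' r - c)) = norm (f' r - c)"
      by (simp add: onorm_scaleR_left onorm_id)
    with assms(2)[OF r] show "onorm (\<lambda>h::real. h *\<^sub>R (f' r - c)) \<le> K"
      by simp
  qed auto
  then show ?thesis
    by (simp add: algebra_simps)
qed

lemma abs_le_if_in_closed_segment_0:
  fixes r s :: real
  assumes "r \<in> closed_segment 0 s"
  shows "\<bar>r\<bar> \<le> \<bar>s\<bar>"
  using assms by (auto simp: closed_segment_eq_real_ivl split: if_splits)

text \<open>Mean value bound first in \<open>v\<close> for \<open>dderiv u g\<close>, then in \<open>u\<close> for the first
  difference in \<open>v\<close>.\<close>
lemma second_difference_bound:
  fixes g :: "'a::real_normed_vector \<Rightarrow> 'b::real_normed_vector"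
  assumes dg: "\<And>y. g differentiable (at y)" and du: "\<And>y. dderiv u g differentiable (at y)"
    and osc: "\<And>r \<tau>. \<bar>r\<bar> \<le> \<bar>s\<bar> \<Longrightarrow> \<bar>\<tau>\<bar> \<le> \<bar>t\<bar> \<Longrightarrow>
      norm (dderiv v (dderiv u g) (x + r *\<^sub>R u + \<tau> *\<^sub>R v) - dderiv v (dderiv u g) x) \<le> e"
  shows "norm (g (x + s *\<^sub>R u + t *\<^sub>R v) - g (x + s *\<^sub>R u) - g (x + t *\<^sub>R v) + g x
      - (s * t) *\<^sub>R dderiv v (dderiv u g) x) \<le> e * \<bar>s\<bar> * \<bar>t\<bar>"
proof -
  define Du where "Du = dderiv u g"
  define D where "D = dderiv v Du"
  have inner: "norm (Du (x + r *\<^sub>R u + t *\<^sub>R v) - Du (x + r *\<^sub>R u) - t *\<^sub>R D x) \<le> e * \<bar>t\<bar>"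
    if r: "r \<in> closed_segment 0 s" for r
  proof -
    have "norm ((\<lambda>\<tau>. Du (x + r *\<^sub>R u + \<tau> *\<^sub>R v)) t - (\<lambda>\<tau>. Du (x + r *\<^sub>R u + \<tau> *\<^sub>R v)) 0
        - t *\<^sub>R D x) \<le> e * \<bar>t\<bar>"
    proof (rule increment_minus_linear_bound)
      fix \<tau> assume "\<tau> \<in> closed_segment 0 t"
      show "((\<lambda>\<tau>. Du (x + r *\<^sub>R u + \<tau> *\<^sub>R v)) has_vector_derivative D (x + r *\<^sub>R u + \<tau> *\<^sub>R v)) (at \<tau>)"
        unfolding D_def Du_def by (rule has_vector_derivative_dderiv_line) (rule du)
      show "norm (D (x + r *\<^sub>R u + \<tau> *\<^sub>R v) - D x) \<le> e"
        unfolding D_def Du_def using r \<open>\<tau> \<in> closed_segment 0 t\<close> by (intro osc abs_le_if_in_closed_segment_0)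
    qed
    then show ?thesis by simp
  qed
  have "norm ((\<lambda>r. g (x + t *\<^sub>R v + r *\<^sub>R u) - g (x + r *\<^sub>R u)) s
      - (\<lambda>r. g (x + t *\<^sub>R v + r *\<^sub>R u) - g (x + r *\<^sub>R u)) 0 - s *\<^sub>R (t *\<^sub>R D x)) \<le> (e * \<bar>t\<bar>) * \<bar>s\<bar>"
  proof (rule increment_minus_linear_bound)
    fix r assume r: "r \<in> closed_segment 0 s"
    show "((\<lambda>r. g (x + t *\<^sub>R v + r *\<^sub>R u) - g (x + r *\<^sub>R u)) has_vector_derivative
        Du (x + t *\<^sub>R v + r *\<^sub>R u) - Du (x + r *\<^sub>R u)) (at r)"
      unfolding Du_def by (intro has_vector_derivative_diff has_vector_derivative_dderiv_line dg)
    show "norm (Du (x + t *\<^sub>R v + r *\<^sub>R u) - Du (x + r *\<^sub>R u) - t *\<^sub>R D x) \<le> e * \<bar>t\<bar>"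
      using inner[OF r] by (simp add: algebra_simps)
  qed
  then show ?thesis
    unfolding D_def Du_def by (simp add: algebra_simps)
qed

lemma continuous_at_parallelogram_bound:
  fixes D :: "'a::real_normed_vector \<Rightarrow> 'b::real_normed_vector"
  assumes "continuous (at x) D" "e > 0"
  obtains d where "d > 0"
    "\<And>r \<tau>. \<bar>r\<bar> \<le> d \<Longrightarrow> \<bar>\<tau>\<bar> \<le> d \<Longrightarrow> norm (D (x + r *\<^sub>R a + \<tau> *\<^sub>R b) - D x) \<le> e"
proof -
  obtain \<delta> where "\<delta> > 0" and \<delta>: "\<And>y. dist y x < \<delta> \<Longrightarrow> dist (D y) (D x) < e"
    using assms unfolding continuous_at_eps_delta by blast
  define d where "d = \<delta> / (norm a + norm b + 1)"
  have "d > 0"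
    using \<open>\<delta> > 0\<close> by (simp add: d_def add_nonneg_pos)
  have near: "dist (x + r *\<^sub>R a + \<tau> *\<^sub>R b) x < \<delta>" if "\<bar>r\<bar> \<le> d" "\<bar>\<tau>\<bar> \<le> d" for r \<tau>
  proof -
    have "norm (r *\<^sub>R a + \<tau> *\<^sub>R b) \<le> d * norm a + d * norm b"
      using that by (metis norm_scaleR norm_triangle_le add_mono mult_right_mono norm_ge_zero)
    also have "\<dots> < d * (norm a + norm b + 1)"
      using \<open>d > 0\<close> by (simp add: algebra_simps)
    also have "\<dots> = \<delta>"
      by (simp add: d_def add_nonneg_pos less_imp_neq[symmetric])
    finally show ?thesis
      by (simp add: dist_norm add.assoc)
  qed
  have "norm (D (x + r *\<^sub>R a + \<tau> *\<^sub>R b) - D x) \<le> e" if "\<bar>r\<bar> \<le> d" "\<bar>\<tau>\<bar> \<le> d" for r \<tau>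
    using \<delta>[OF near[OF that]] by (simp add: dist_norm)
  with \<open>d > 0\<close> show thesis
    by (rule that)
qed

text \<open>Schwarz's theorem: compare the second difference with both mixed derivatives.\<close>
lemma dderiv_commute:
  fixes g :: "'a::real_normed_vector \<Rightarrow> 'b::real_normed_vector"
  assumes dg: "\<And>y. g differentiable (at y)"
    and du: "\<And>y. dderiv u g differentiable (at y)" and dv: "\<And>y. dderiv v g differentiable (at y)"
    and cuv: "continuous (at x) (dderiv v (dderiv u g))"
    and cvu: "continuous (at x) (dderiv u (dderiv v g))"
  shows "dderiv v (dderiv u g) x = dderiv u (dderiv v g) x"
proof -
  define A where "A = dderiv v (dderiv u g) x"
  define B where "B = dderiv u (dderiv v g) x"
  have bound: "norm (A - B) \<le> 2 * e" if "e > 0" for e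
  proof -
    obtain d1 where "d1 > 0" and oscA: "\<And>r \<tau>. \<bar>r\<bar> \<le> d1 \<Longrightarrow> \<bar>\<tau>\<bar> \<le> d1 \<Longrightarrow>
        norm (dderiv v (dderiv u g) (x + r *\<^sub>R u + \<tau> *\<^sub>R v) - A) \<le> e"
      using continuous_at_parallelogram_bound[OF cuv \<open>e > 0\<close>, where a = u and b = v] unfolding A_def by blast
    obtain d2 where "d2 > 0" and oscB: "\<And>r \<tau>. \<bar>r\<bar> \<le> d2 \<Longrightarrow> \<bar>\<tau>\<bar> \<le> d2 \<Longrightarrow>
        norm (dderiv u (dderiv v g) (x + r *\<^sub>R v + \<tau> *\<^sub>R u) - B) \<le> e"
      using continuous_at_parallelogram_bound[OF cvu \<open>e > 0\<close>, where a = v and b = u] unfolding B_def by blast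
    define s where "s = min d1 d2"
    have "s > 0" "\<bar>s\<bar> \<le> d1" "\<bar>s\<bar> \<le> d2"
      using \<open>d1 > 0\<close> \<open>d2 > 0\<close> by (auto simp: s_def)
    define H where "H = g (x + s *\<^sub>R u + s *\<^sub>R v) - g (x + s *\<^sub>R u) - g (x + s *\<^sub>R v) + g x"
    have "norm (H - (s * s) *\<^sub>R A) \<le> e * \<bar>s\<bar> * \<bar>s\<bar>"
      unfolding H_def A_def using oscA \<open>\<bar>s\<bar> \<le> d1\<close>
      by (intro second_difference_bound[OF dg du]) (simp add: A_def)
    moreover have "norm (H - (s * s) *\<^sub>R B) \<le> e * \<bar>s\<bar> * \<bar>s\<bar>"
    proof -
      have H_swap: "H = g (x + s *\<^sub>R v + s *\<^sub>R u) - g (x + s *\<^sub>R v) - g (x + s *\<^sub>R u) + g x"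
        by (simp add: H_def algebra_simps)
      show ?thesis
        unfolding H_swap B_def using oscB \<open>\<bar>s\<bar> \<le> d2\<close>
        by (intro second_difference_bound[OF dg dv]) (simp add: B_def)
    qed
    ultimately have "norm ((s * s) *\<^sub>R (A - B)) \<le> (s * s) * (2 * e)"
      using norm_triangle_ineq4[of "H - (s * s) *\<^sub>R B" "H - (s * s) *\<^sub>R A"]
      by (simp add: algebra_simps)
    with \<open>s > 0\<close> show ?thesis
      by (simp add: mult_le_cancel_left_pos)
  qed
  have "norm (A - B) \<le> 0 + e" if "e > 0" for e
    using bound[of "e / 2"] that by simp
  then have "norm (A - B) \<le> 0"
    by (rule field_le_epsilon)
  then show ?thesis
    by (simp add: A_def B_def)
qed

lemma smooth_dderivs:
  assumes "smooth g" "set vs \<subseteq> Basis"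
  shows "smooth (dderivs vs g)"
  using assms unfolding smooth_def by (metis dderivs_append le_sup_iff set_append)

lemma smooth_imp_differentiable:
  assumes "smooth g"
  shows "g differentiable (at x)"
  using assms unfolding smooth_def by (metis dderivs.simps(1) empty_subsetI empty_set)

lemma smooth_dderiv_commute:
  assumes "smooth g" "u \<in> Basis" "v \<in> Basis"
  shows "dderiv v (dderiv u g) = dderiv u (dderiv v g)"
proof
  fix x
  have smooth: "smooth (dderivs vs g)" if "set vs \<subseteq> {u, v}" for vs
    using smooth_dderivs[OF assms(1)] that assms(2,3) by blast
  show "dderiv v (dderiv u g) x = dderiv u (dderiv v g) x"
    using smooth[of "[]"] smooth[of "[u]"] smooth[of "[v]"] smooth[of "[v, u]"] smooth[of "[u, v]"]
    by (intro dderiv_commute differentiable_imp_continuous_within smooth_imp_differentiable) auto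
qed

lemma smooth_dderivs_snoc:
  assumes "smooth g" "set vs \<subseteq> Basis" "u \<in> Basis"
  shows "dderivs (vs @ [u]) g = dderiv u (dderivs vs g)"
  using assms(2)
proof (induction vs)
  case (Cons w vs)
  then have "dderivs ((w # vs) @ [u]) g = dderiv w (dderiv u (dderivs vs g))"
    by simp
  also have "\<dots> = dderiv u (dderiv w (dderivs vs g))"
    using smooth_dderiv_commute[OF smooth_dderivs[OF assms(1)]] Cons.prems assms(3) by simp
  finally show ?case
    by simp
qed simp

lemma smooth_dderivs_mset_eq:
  assumes "smooth g" "set vs \<subseteq> Basis" "mset vs = mset ws"
  shows "dderivs vs g = dderivs ws g"
  using assms(2,3)
proof (induction vs arbitrary: ws)
  case (Cons u vs)
  then have "u \<in> set ws"
    by (metis list.set_intros(1) set_mset_mset)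
  then obtain p q where ws: "ws = p @ u # q"
    by (meson split_list)
  have "set ws \<subseteq> Basis"
    using Cons.prems by (metis mset_eq_setD)
  then have "dderivs ws g = dderivs (p @ [u]) (dderivs q g)"
    by (simp add: ws flip: dderivs_append)
  also have "\<dots> = dderiv u (dderivs (p @ q) g)"
    using smooth_dderivs_snoc[OF smooth_dderivs[OF assms(1)]] \<open>set ws \<subseteq> Basis\<close>
    by (simp add: ws dderivs_append)
  also have "\<dots> = dderiv u (dderivs vs g)"
    using Cons.IH[of "p @ q"] Cons.prems ws by simp
  finally show ?case
    by simp
qed simp

section \<open>Multi-indices and mixed partial derivatives\<close>

lemma count_multi_list: "count (mset (multi_list \<alpha>)) i = \<alpha> i"
proof -
  obtain L where "mset L = Abs_multiset \<alpha>"
    using ex_mset by blast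
  then have "\<exists>L. \<forall>i. count (mset L) i = \<alpha> i"
    by (metis count_Abs_multiset finite)
  then show ?thesis
    unfolding multi_list_def by (rule someI_ex[where P = "\<lambda>L. \<forall>i. count (mset L) i = \<alpha> i", THEN spec])
qed

lemma mset_multi_list_fun_upd: "mset (multi_list (\<alpha>(i := Suc (\<alpha> i)))) = add_mset i (mset (multi_list \<alpha>))"
  by (rule multiset_eqI) (simp add: count_multi_list)

lemma multi_list_zero: "multi_list (\<lambda>_. 0) = []"
  using count_multi_list[of "\<lambda>_. 0"] by (metis count_eq_zero_iff mset_zero_iff multiset_nonemptyE)

lemma length_multi_list: "length (multi_list \<alpha>) = mabs \<alpha>"
  using sum_count_set[of "multi_list \<alpha>" UNIV] count_multi_list[of \<alpha>]
  by (simp add: mabs_def flip: count_mset)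

lemma mabs_zero: "mabs (\<lambda>_. 0) = 0"
  by (simp add: mabs_def)

lemma mabs_fun_upd: "mabs (\<beta>(i := Suc (\<beta> i))) = Suc (mabs \<beta>)"
  unfolding mabs_def by (simp add: sum.remove[of UNIV i])

definition xxi_directions :: "('n::finite \<Rightarrow> nat) \<Rightarrow> ('n \<Rightarrow> nat) \<Rightarrow> ((real^'n) \<times> (real^'n)) list" where
  "xxi_directions \<alpha> \<beta> = map (\<lambda>i. (axis i 1, 0)) (multi_list \<alpha>) @ map (\<lambda>i. (0, axis i 1)) (multi_list \<beta>)"

definition xi_degree :: "(real^'n::finite) \<times> (real^'n) \<Rightarrow> nat" where
  "xi_degree v = (if fst v = 0 then 1 else 0)"

lemma pd_xxi_eq_dderivs: "pd_xxi \<alpha> \<beta> f = dderivs (xxi_directions \<alpha> \<beta>) f"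
  unfolding pd_xxi_def xxi_directions_def ..

lemma pd_xxi_zero: "pd_xxi (\<lambda>_. 0) (\<lambda>_. 0) f = f"
  by (simp add: pd_xxi_def multi_list_zero)

lemma Basis_prod_vec_cases:
  assumes "(v :: (real^'n::finite) \<times> (real^'n)) \<in> Basis"
  obtains i where "v = (axis i 1, 0)" | i where "v = (0, axis i 1)"
  using assms by (auto simp: Basis_prod_def Basis_vec_def)

lemma set_xxi_directions: "set (xxi_directions \<alpha> \<beta>) \<subseteq> Basis"
  by (auto simp: xxi_directions_def Basis_prod_def Basis_vec_def)

lemma sum_list_xi_degree: "sum_list (map xi_degree (xxi_directions \<alpha> \<beta>)) = mabs \<beta>"
  by (simp add: xxi_directions_def xi_degree_def comp_def sum_list_triv length_multi_list)

lemma xxi_directions_add_mset: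
  assumes "v \<in> Basis"
  obtains \<alpha>' \<beta>' where "mset (xxi_directions \<alpha>' \<beta>') = add_mset v (mset (xxi_directions \<alpha> \<beta>))"
    and "mabs \<beta>' = mabs \<beta> + xi_degree v"
  using assms
proof (cases rule: Basis_prod_vec_cases)
  case (1 i)
  then show thesis
    by (intro that[of "\<alpha>(i := Suc (\<alpha> i))" \<beta>])
      (simp_all add: xxi_directions_def mset_multi_list_fun_upd xi_degree_def)
next
  case (2 i)
  then show thesis
    by (intro that[of \<alpha> "\<beta>(i := Suc (\<beta> i))"])
      (simp_all add: xxi_directions_def mset_multi_list_fun_upd xi_degree_def mabs_fun_upd)
qed

lemma dderiv_pd_xxi:
  assumes "smooth \<sigma>" "v \<in> Basis"
  obtains \<alpha>' \<beta>' where "dderiv v (pd_xxi \<alpha> \<beta> \<sigma>) = pd_xxi \<alpha>' \<beta>' \<sigma>" "mabs \<beta>' = mabs \<beta> + xi_degree v"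
proof -
  obtain \<alpha>' \<beta>' where mset: "mset (xxi_directions \<alpha>' \<beta>') = add_mset v (mset (xxi_directions \<alpha> \<beta>))"
    and "mabs \<beta>' = mabs \<beta> + xi_degree v"
    using xxi_directions_add_mset[OF assms(2)] .
  moreover have "dderivs (v # xxi_directions \<alpha> \<beta>) \<sigma> = dderivs (xxi_directions \<alpha>' \<beta>') \<sigma>"
    using mset assms set_xxi_directions by (intro smooth_dderivs_mset_eq) auto
  ultimately show thesis
    by (intro that) (simp_all add: pd_xxi_eq_dderivs)
qed

definition weight_bounded :: "('b \<Rightarrow> real) \<Rightarrow> real \<Rightarrow> ('a \<times> 'b \<Rightarrow> 'c::real_normed_vector) \<Rightarrow> bool" where
  "weight_bounded \<Lambda> s h \<longleftrightarrow> (\<exists>C>0. \<forall>x \<xi>. norm (h (x, \<xi>)) \<le> C * \<Lambda> \<xi> powr s)"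

lemma symbol_class_iff:
  "\<sigma> \<in> symbol_class m \<rho> \<Lambda> \<longleftrightarrow>
    smooth \<sigma> \<and> (\<forall>\<alpha> \<beta>. weight_bounded \<Lambda> (m - \<rho> * real (mabs \<beta>)) (pd_xxi \<alpha> \<beta> \<sigma>))"
  unfolding symbol_class_def weight_bounded_def by simp

lemma weight_bounded_zero_iff:
  assumes "\<And>\<xi>. \<Lambda> \<xi> > 0"
  shows "weight_bounded \<Lambda> 0 h \<longleftrightarrow> (\<exists>B. \<forall>z. norm (h z) \<le> B)"
proof
  assume "weight_bounded \<Lambda> 0 h"
  then show "\<exists>B. \<forall>z. norm (h z) \<le> B"
    using assms unfolding weight_bounded_def by (metis less_irrefl powr_zero_eq_one prod.collapse)
next
  assume "\<exists>B. \<forall>z. norm (h z) \<le> B"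
  then obtain B where "\<And>z. norm (h z) \<le> B"
    by blast
  then show "weight_bounded \<Lambda> 0 h"
    using assms unfolding weight_bounded_def
    by (intro exI[of _ "max B 1"]) (auto simp: less_imp_neq[symmetric] max.coboundedI1)
qed

lemma weight_bounded_norm_le:
  assumes "weight_bounded \<Lambda> s h" "\<And>z. norm (g z) \<le> norm (h z)"
  shows "weight_bounded \<Lambda> s g"
  using assms unfolding weight_bounded_def by (meson order_trans)

lemma weight_bounded_add:
  assumes "weight_bounded \<Lambda> s f" "weight_bounded \<Lambda> s g"
  shows "weight_bounded \<Lambda> s (\<lambda>z. f z + g z)"
proof -
  obtain C D where "C > 0" "D > 0"
    and "\<And>x \<xi>. norm (f (x, \<xi>)) \<le> C * \<Lambda> \<xi> powr s" "\<And>x \<xi>. norm (g (x, \<xi>)) \<le> D * \<Lambda> \<xi> powr s"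
    using assms unfolding weight_bounded_def by blast
  then have "norm (f (x, \<xi>) + g (x, \<xi>)) \<le> (C + D) * \<Lambda> \<xi> powr s" for x \<xi>
    by (metis norm_triangle_le add_mono distrib_right)
  with \<open>C > 0\<close> \<open>D > 0\<close> show ?thesis
    unfolding weight_bounded_def by (intro exI[of _ "C + D"]) auto
qed

lemma weight_bounded_mult:
  fixes f g :: "'a \<times> 'b \<Rightarrow> 'c::real_normed_algebra"
  assumes "weight_bounded \<Lambda> s f" "weight_bounded \<Lambda> t g"
  shows "weight_bounded \<Lambda> (s + t) (\<lambda>z. f z * g z)"
proof -
  obtain C D where "C > 0" "D > 0"
    and "\<And>x \<xi>. norm (f (x, \<xi>)) \<le> C * \<Lambda> \<xi> powr s" "\<And>x \<xi>. norm (g (x, \<xi>)) \<le> D * \<Lambda> \<xi> powr t"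
    using assms unfolding weight_bounded_def by blast
  then have "norm (f (x, \<xi>) * g (x, \<xi>)) \<le> (C * \<Lambda> \<xi> powr s) * (D * \<Lambda> \<xi> powr t)" for x \<xi>
    by (meson norm_mult_ineq order_trans mult_mono norm_ge_zero)
  then have "norm (f (x, \<xi>) * g (x, \<xi>)) \<le> (C * D) * \<Lambda> \<xi> powr (s + t)" for x \<xi>
    by (simp add: powr_add algebra_simps)
  with \<open>C > 0\<close> \<open>D > 0\<close> show ?thesis
    unfolding weight_bounded_def by (intro exI[of _ "C * D"]) auto
qed

section \<open>Derivatives of a composition\<close>

text \<open>The terms of the expansion of the derivatives of \<open>F \<circ> \<sigma>\<close>, indexed by their total
  \<open>\<xi>\<close>-order. Real and imaginary parts enter because \<open>F\<close> is only real differentiable: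
  \<open>\<partial>\<^sub>v (G \<circ> \<sigma>) = Re (\<partial>\<^sub>v \<sigma>) (\<partial>\<^sub>1 G \<circ> \<sigma>) + Im (\<partial>\<^sub>v \<sigma>) (\<partial>\<^sub>i G \<circ> \<sigma>)\<close>.\<close>
inductive composite_term :: "(complex \<Rightarrow> complex) \<Rightarrow> ((real^'n::finite) \<times> (real^'n) \<Rightarrow> complex) \<Rightarrow> nat
    \<Rightarrow> ((real^'n) \<times> (real^'n) \<Rightarrow> complex) \<Rightarrow> bool" for F \<sigma> where
  dderivs_outer: "set us \<subseteq> Basis \<Longrightarrow> composite_term F \<sigma> 0 (\<lambda>z. dderivs us F (\<sigma> z))"
| pd_xxi_inner: "composite_term F \<sigma> (mabs \<beta>) (pd_xxi \<alpha> \<beta> \<sigma>)"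
| of_real_Re: "composite_term F \<sigma> m h \<Longrightarrow> composite_term F \<sigma> m (\<lambda>z. of_real (Re (h z)))"
| of_real_Im: "composite_term F \<sigma> m h \<Longrightarrow> composite_term F \<sigma> m (\<lambda>z. of_real (Im (h z)))"
| mult: "composite_term F \<sigma> m h \<Longrightarrow> composite_term F \<sigma> n k \<Longrightarrow> composite_term F \<sigma> (m + n) (\<lambda>z. h z * k z)"
| add: "composite_term F \<sigma> m h \<Longrightarrow> composite_term F \<sigma> m k \<Longrightarrow> composite_term F \<sigma> m (\<lambda>z. h z + k z)"

lemma bounded_linear_of_real_Re: "bounded_linear (\<lambda>c. complex_of_real (Re c))"
  by (rule bounded_linear_compose[OF bounded_linear_of_real bounded_linear_Re])

lemma bounded_linear_of_real_Im: "bounded_linear (\<lambda>c. complex_of_real (Im c))"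
  by (rule bounded_linear_compose[OF bounded_linear_of_real bounded_linear_Im])

lemma composite_term_differentiable:
  assumes "smooth F" "smooth \<sigma>" "composite_term F \<sigma> m h"
  shows "h differentiable (at z)"
  using assms(3)
proof (induction arbitrary: z)
  case (dderivs_outer us)
  show ?case
  proof (rule differentiable_compose[of "dderivs us F" \<sigma>])
    show "dderivs us F differentiable (at (\<sigma> z))"
      using smooth_dderivs[OF assms(1) dderivs_outer] by (rule smooth_imp_differentiable)
    show "\<sigma> differentiable (at z)"
      using assms(2) by (rule smooth_imp_differentiable)
  qed
next
  case (pd_xxi_inner \<beta> \<alpha>)
  show ?case
    unfolding pd_xxi_eq_dderivs
    by (intro smooth_imp_differentiable smooth_dderivs assms(2) set_xxi_directions)
next
  case (of_real_Re m h)
  from bounded_linear_imp_differentiable[OF bounded_linear_of_real_Re] of_real_Re.IH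
  show ?case
    by (rule differentiable_compose)
next
  case (of_real_Im m h)
  from bounded_linear_imp_differentiable[OF bounded_linear_of_real_Im] of_real_Im.IH
  show ?case
    by (rule differentiable_compose)
qed simp_all

lemma composite_term_dderiv:
  assumes F: "smooth F" and \<sigma>: "smooth \<sigma>" and v: "v \<in> Basis"
  shows "composite_term F \<sigma> m h \<Longrightarrow> composite_term F \<sigma> (m + xi_degree v) (dderiv v h)"
proof (induction rule: composite_term.induct)
  case (dderivs_outer us)
  obtain \<alpha> \<beta> where d\<sigma>: "dderiv v \<sigma> = pd_xxi \<alpha> \<beta> \<sigma>" and "mabs \<beta> = xi_degree v"
    using dderiv_pd_xxi[OF \<sigma> v, of "\<lambda>_. 0" "\<lambda>_. 0"] by (auto simp: pd_xxi_zero mabs_zero)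
  have "dderiv v (\<lambda>z. dderivs us F (\<sigma> z)) =
      (\<lambda>z. of_real (Re (pd_xxi \<alpha> \<beta> \<sigma> z)) * dderivs (1 # us) F (\<sigma> z)
        + of_real (Im (pd_xxi \<alpha> \<beta> \<sigma> z)) * dderivs (\<i> # us) F (\<sigma> z))"
  proof
    fix z
    have dF: "dderivs us F differentiable (at (\<sigma> z))"
      using smooth_dderivs[OF F dderivs_outer] by (rule smooth_imp_differentiable)
    have "dderiv v (\<lambda>z. dderivs us F (\<sigma> z)) z = dderiv (dderiv v \<sigma> z) (dderivs us F) (\<sigma> z)"
      using smooth_imp_differentiable[OF \<sigma>] dF by (rule dderiv_compose)
    also have "\<dots> = Re (dderiv v \<sigma> z) *\<^sub>R dderiv 1 (dderivs us F) (\<sigma> z)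
        + Im (dderiv v \<sigma> z) *\<^sub>R dderiv \<i> (dderivs us F) (\<sigma> z)"
      using dF by (rule dderiv_complex_direction)
    finally show "dderiv v (\<lambda>z. dderivs us F (\<sigma> z)) z = of_real (Re (pd_xxi \<alpha> \<beta> \<sigma> z)) * dderivs (1 # us) F (\<sigma> z)
        + of_real (Im (pd_xxi \<alpha> \<beta> \<sigma> z)) * dderivs (\<i> # us) F (\<sigma> z)"
      by (simp add: d\<sigma> scaleR_conv_of_real)
  qed
  moreover have "composite_term F \<sigma> (mabs \<beta> + 0)
      (\<lambda>z. of_real (Re (pd_xxi \<alpha> \<beta> \<sigma> z)) * dderivs (1 # us) F (\<sigma> z)
        + of_real (Im (pd_xxi \<alpha> \<beta> \<sigma> z)) * dderivs (\<i> # us) F (\<sigma> z))"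
    using dderivs_outer by (intro composite_term.intros) (auto simp: Basis_complex_def)
  ultimately show ?case
    using \<open>mabs \<beta> = xi_degree v\<close> by simp
next
  case (pd_xxi_inner \<beta> \<alpha>)
  obtain \<alpha>' \<beta>' where "dderiv v (pd_xxi \<alpha> \<beta> \<sigma>) = pd_xxi \<alpha>' \<beta>' \<sigma>" "mabs \<beta>' = mabs \<beta> + xi_degree v"
    using dderiv_pd_xxi[OF \<sigma> v] .
  then show ?case
    by (metis composite_term.pd_xxi_inner)
next
  case (of_real_Re m h)
  have "dderiv v (\<lambda>z. complex_of_real (Re (h z))) z = of_real (Re (dderiv v h z))" for z
    using dderiv_bounded_linear[OF bounded_linear_of_real_Re composite_term_differentiable[OF F \<sigma> of_real_Re.hyps]]
    by simp
  with of_real_Re.IH show ?case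
    by (simp add: composite_term.of_real_Re flip: fun_eq_iff)
next
  case (of_real_Im m h)
  have "dderiv v (\<lambda>z. complex_of_real (Im (h z))) z = of_real (Im (dderiv v h z))" for z
    using dderiv_bounded_linear[OF bounded_linear_of_real_Im composite_term_differentiable[OF F \<sigma> of_real_Im.hyps]]
    by simp
  with of_real_Im.IH show ?case
    by (simp add: composite_term.of_real_Im flip: fun_eq_iff)
next
  case (mult m h n k)
  have "dderiv v (\<lambda>z. h z * k z) = (\<lambda>z. h z * dderiv v k z + dderiv v h z * k z)"
    using composite_term_differentiable[OF F \<sigma>] mult.hyps by (intro ext dderiv_mult)
  moreover have "composite_term F \<sigma> (m + n + xi_degree v) (\<lambda>z. h z * dderiv v k z + dderiv v h z * k z)"
  proof (rule composite_term.add)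
    show "composite_term F \<sigma> (m + n + xi_degree v) (\<lambda>z. h z * dderiv v k z)"
      using composite_term.mult[OF mult.hyps(1) mult.IH(2)] by (simp add: add.assoc)
    show "composite_term F \<sigma> (m + n + xi_degree v) (\<lambda>z. dderiv v h z * k z)"
      using composite_term.mult[OF mult.IH(1) mult.hyps(2)] by (simp add: ac_simps)
  qed
  ultimately show ?case
    by simp
next
  case (add m h k)
  have "dderiv v (\<lambda>z. h z + k z) = (\<lambda>z. dderiv v h z + dderiv v k z)"
    using composite_term_differentiable[OF F \<sigma>] add.hyps by (intro ext dderiv_add)
  with add.IH show ?case
    by (simp add: composite_term.add)
qed

lemma composite_term_dderivs:
  assumes "smooth F" "smooth \<sigma>" "composite_term F \<sigma> m h" "set vs \<subseteq> Basis"
  shows "composite_term F \<sigma> (m + sum_list (map xi_degree vs)) (dderivs vs h)"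
  using assms(4)
proof (induction vs)
  case (Cons v vs)
  then have "composite_term F \<sigma> (m + sum_list (map xi_degree vs) + xi_degree v) (dderivs (v # vs) h)"
    using composite_term_dderiv[OF assms(1,2)] by simp
  then show ?case
    by (simp add: ac_simps)
qed (simp add: assms(3))

lemma bounded_compose_continuous:
  fixes f :: "'a \<Rightarrow> 'b::{real_normed_vector,heine_borel}" and G :: "'b \<Rightarrow> 'c::real_normed_vector"
  assumes "continuous_on UNIV G" "\<And>z. norm (f z) \<le> R"
  obtains B where "\<And>z. norm (G (f z)) \<le> B"
proof -
  have "compact (G ` cball 0 R)"
    using assms(1) by (intro compact_continuous_image continuous_on_subset[OF assms(1)]) auto
  then obtain B where "\<forall>y\<in>G ` cball 0 R. norm y \<le> B"
    using compact_imp_bounded bounded_iff by metis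
  with assms(2) show thesis
    by (intro that) auto
qed

lemma composite_term_weight_bounded:
  fixes \<sigma> :: "(real^'n::finite) \<times> (real^'n) \<Rightarrow> complex"
  assumes F: "smooth F" and \<Lambda>: "\<And>\<xi>. \<Lambda> \<xi> > 0" and \<sigma>: "\<sigma> \<in> symbol_class 0 \<rho> \<Lambda>"
  shows "composite_term F \<sigma> m h \<Longrightarrow> weight_bounded \<Lambda> (- \<rho> * real m) h"
proof (induction rule: composite_term.induct)
  case (dderivs_outer us)
  have "weight_bounded \<Lambda> (0 - \<rho> * real (mabs (\<lambda>_::'n. 0))) (pd_xxi (\<lambda>_. 0) (\<lambda>_. 0) \<sigma>)"
    using \<sigma> unfolding symbol_class_iff by blast
  then have "weight_bounded \<Lambda> 0 \<sigma>"
    by (simp add: mabs_zero pd_xxi_zero)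
  then obtain R where "\<And>z. norm (\<sigma> z) \<le> R"
    unfolding weight_bounded_zero_iff[OF \<Lambda>] by blast
  moreover have "continuous_on UNIV (dderivs us F)"
    using smooth_dderivs[OF F dderivs_outer]
    by (intro differentiable_imp_continuous_on differentiable_at_imp_differentiable_on smooth_imp_differentiable)
  ultimately obtain B where "\<And>z. norm (dderivs us F (\<sigma> z)) \<le> B"
    using bounded_compose_continuous by metis
  then show ?case
    by (simp add: weight_bounded_zero_iff[OF \<Lambda>]) blast
next
  case (pd_xxi_inner \<beta> \<alpha>)
  then show ?case
    using \<sigma> by (simp add: symbol_class_iff)
next
  case (of_real_Re m h)
  from of_real_Re.IH show ?case
    by (rule weight_bounded_norm_le) (simp add: abs_Re_le_cmod)
next
  case (of_real_Im m h)
  from of_real_Im.IH show ?case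
    by (rule weight_bounded_norm_le) (simp add: abs_Im_le_cmod)
next
  case (mult m h n k)
  from weight_bounded_mult[OF mult.IH] show ?case
    by (simp add: algebra_simps)
next
  case (add m h k)
  from add.IH show ?case
    by (rule weight_bounded_add)
qed

theorem mainTheorem5:
  fixes \<Lambda> :: "real^'n::finite \<Rightarrow> real" and \<mu> \<rho> :: real
    and \<sigma> :: "(real^'n) \<times> (real^'n) \<Rightarrow> complex" and F :: "complex \<Rightarrow> complex"
  assumes "weight_poly_growth \<Lambda> \<mu>"
    and "0 < \<rho>" and "\<rho> \<le> 1 / \<mu>"
    and "\<sigma> \<in> symbol_class 0 \<rho> \<Lambda>"
    and "smooth F"
  shows "F \<circ> \<sigma> \<in> symbol_class 0 \<rho> \<Lambda>"
proof -
  have \<Lambda>: "\<And>\<xi>. \<Lambda> \<xi> > 0"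
    using assms(1) by (simp add: weight_poly_growth_def)
  have \<sigma>: "smooth \<sigma>"
    using assms(4) by (simp add: symbol_class_iff)
  have "composite_term F \<sigma> 0 (F \<circ> \<sigma>)"
    using composite_term.dderivs_outer[of "[]" F \<sigma>] by (simp add: comp_def)
  from composite_term_dderivs[OF assms(5) \<sigma> this]
  have derivs: "composite_term F \<sigma> (sum_list (map xi_degree vs)) (dderivs vs (F \<circ> \<sigma>))"
    if "set vs \<subseteq> Basis" for vs
    using that by simp
  have "smooth (F \<circ> \<sigma>)"
    unfolding smooth_def using composite_term_differentiable[OF assms(5) \<sigma> derivs] by blast
  moreover have "weight_bounded \<Lambda> (0 - \<rho> * real (mabs \<beta>)) (pd_xxi \<alpha> \<beta> (F \<circ> \<sigma>))" for \<alpha> \<beta>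
    using composite_term_weight_bounded[OF assms(5) \<Lambda> assms(4) derivs[OF set_xxi_directions]]
    by (simp add: pd_xxi_eq_dderivs sum_list_xi_degree)
  ultimately show ?thesis
    by (simp add: symbol_class_iff)
qed

end
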